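(* For every positive integer $n$, the function $\tilde B_n(h)$ is strictly increasing on $(0,d_n)$, i.e. $\tilde B_n'(h)>0$ for all $h\in(0,d_n)$, and $\lim_{h\to0}\tilde B_n(h)=0$.
   Context: Let $n$ be a positive integer, $d_n=\frac{n(n+1)^{2/n}}{2(n+2)}$, $W(u)=\frac{u^2}{2}-\frac{u^{n+2}}{(n+1)(n+2)}$ and $H(u,v)=\frac{v^2}{2}+W(u)$, the Hamiltonian of the system $u'=v$, $v'=-u+\frac{1}{n+1}u^{n+1}$. For $h\in(0,d_n)$ let $\Gamma_h$ be the periodic orbit of this system contained in $\{H=h\}$ surrounding the center $(0,0)$, oriented clockwise. Define $B_n(h)=\oint_{\Gamma_h}u^n v\,du$, $B_0(h)=\oint_{\Gamma_h}v\,du$ and $\tilde B_n(h)=B_n(h)/B_0(h)$. *)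

theory Defs
  imports "HOL-Analysis.Analysis"
begin

definition d_n :: "nat \<Rightarrow> real" where
  "d_n n = real n * (real n + 1) powr (2 / real n) / (2 * (real n + 2))"

definition W :: "nat \<Rightarrow> real \<Rightarrow> real" where
  "W n u = u^2 / 2 - u^(n+2) / ((real n + 1) * (real n + 2))"

definition H :: "nat \<Rightarrow> real \<Rightarrow> real \<Rightarrow> real" where
  "H n u v = v^2 / 2 + W n u"

definition field :: "nat \<Rightarrow> real \<times> real \<Rightarrow> real \<times> real" where
  "field n p = (snd p, - fst p + (fst p)^(n+1) / (real n + 1))"

text \<open>x is the trajectory of the system through the point (0, sqrt(2h)) of the oval
  in {H = h} (the top point on the v-axis), and T is its minimal positive period.
  Since u' = v > 0 there, the motion on the oval is clockwise.\<close>
definition is_orbit :: "nat \<Rightarrow> real \<Rightarrow> (real \<Rightarrow> real \<times> real) \<Rightarrow> real \<Rightarrow> bool" where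
  "is_orbit n h x T \<longleftrightarrow>
     (\<forall>t. (x has_vector_derivative field n (x t)) (at t)) \<and>
     x 0 = (0, sqrt (2 * h)) \<and> T > 0 \<and> x T = x 0 \<and> (\<forall>t\<in>{0<..<T}. x t \<noteq> x 0)"

definition orbit :: "nat \<Rightarrow> real \<Rightarrow> (real \<Rightarrow> real \<times> real) \<times> real" where
  "orbit n h = (SOME (x, T). is_orbit n h x T)"

text \<open>Line integral of the 1-form f(u,v) du along the clockwise oriented periodic orbit
  Gamma_h, parametrised by the trajectory over one period.\<close>
definition oint_du :: "nat \<Rightarrow> real \<Rightarrow> (real \<Rightarrow> real \<Rightarrow> real) \<Rightarrow> real" where
  "oint_du n h f = (case orbit n h of (x, T) \<Rightarrow>
      integral {0..T} (\<lambda>t. f (fst (x t)) (snd (x t)) * deriv (\<lambda>s. fst (x s)) t))"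

definition B :: "nat \<Rightarrow> real \<Rightarrow> real" where
  "B n h = oint_du n h (\<lambda>u v. u^n * v)"

definition B0 :: "nat \<Rightarrow> real \<Rightarrow> real" where
  "B0 n h = oint_du n h (\<lambda>u v. v)"

definition Btilde :: "nat \<Rightarrow> real \<Rightarrow> real" where
  "Btilde n h = B n h / B0 n h"

end

theory Submission
  imports Defs
begin

text \<open>
  Write \<open>2 W = phi\<^sup>2\<close> with \<open>phi u = u sqrt (1 - kappa u\<^sup>n)\<close>; on the potential well \<open>phi\<close> is
  increasing, with inverse \<open>psi\<close>. The level curve \<open>H = r\<^sup>2/2\<close> becomes the circle
  \<open>phi(u)\<^sup>2 + v\<^sup>2 = r\<^sup>2\<close>, parametrised by \<open>phi u = r sin \<theta>\<close>, \<open>v = r cos \<theta>\<close>, and along the flow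
  \<open>dt/d\<theta> = psi'(r sin \<theta>)\<close>. In this angle \<open>I\<^sub>k = \<oint> u\<^sup>k v du\<close> and its \<open>h\<close>-derivative
  \<open>J\<^sub>k = \<oint> u\<^sup>k du / v\<close> are integrals over \<open>[0, 2\<pi>]\<close>. Integration by parts and the energy
  relation give, with \<open>c = n / (2 (n + 2))\<close>,
  \<open>h J\<^sub>0 = I\<^sub>0 + c J\<^sub>n\<^sub>+\<^sub>2 / (n + 1)\<close> and \<open>h J\<^sub>n = (1 + c) I\<^sub>n + c J\<^sub>n\<^sub>+\<^sub>2\<close>, hence
  \<open>h (J\<^sub>n I\<^sub>0 - I\<^sub>n J\<^sub>0) = c I\<^sub>n I\<^sub>0 + c J\<^sub>n\<^sub>+\<^sub>2 (I\<^sub>0 - I\<^sub>n / (n + 1)) > 0\<close>, the numerator of the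
  derivative of \<open>B\<^sub>n / B\<^sub>0\<close>. Positivity of \<open>I\<^sub>n\<close> and \<open>J\<^sub>n\<^sub>+\<^sub>2\<close> comes from pairing \<open>\<theta>\<close> with
  \<open>\<theta> + \<pi>\<close>: for odd \<open>n\<close> the right branch of an oval lies farther from the origin and is
  traversed more slowly than the left one. The limit at \<open>0\<close> follows from
  \<open>|I\<^sub>n| \<le> (max |u|)\<^sup>n I\<^sub>0\<close>. The periodic orbit of the definition is identified with the angle
  parametrisation by uniqueness of solutions of the locally Lipschitz system.
\<close>

section \<open>Integrals, inverse functions and uniqueness of solutions\<close>

lemma integral_pos_if_pos_point:
  fixes f :: "real \<Rightarrow> real"
  assumes "continuous_on {a..b} f" "a < b" "\<And>x. x \<in> {a..b} \<Longrightarrow> 0 \<le> f x"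
    and "z \<in> {a..b}" "0 < f z"
  shows "0 < integral {a..b} f"
proof -
  have "0 \<le> integral {a..b} f"
    using assms by (intro integral_nonneg integrable_continuous_interval) auto
  moreover have "integral {a..b} f \<noteq> 0"
    using integral_cbox_eq_0_iff[of a b f] assms by (force simp: cbox_interval)
  ultimately show ?thesis by simp
qed

lemma integral_split_half_period:
  fixes f :: "real \<Rightarrow> real"
  assumes "continuous_on {0..2*c} f" "0 \<le> c"
  shows "integral {0..2*c} f = integral {0..c} (\<lambda>t. f t + f (t + c))"
proof -
  have "continuous_on {0..c} f" "continuous_on {0..c} (\<lambda>t. f (t + c))"
    using assms by (auto intro!: continuous_on_compose2[OF assms(1)] continuous_intros
        intro: continuous_on_subset)
  then have "integral {0..c} (\<lambda>t. f t + f (t + c)) = integral {0..c} f + integral {c..2*c} f"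
    using integral_shift_real_ivl[of c c "2*c" f]
    by (simp add: integral_add integrable_continuous_interval)
  also have "\<dots> = integral {0..2*c} f"
    using assms by (intro Henstock_Kurzweil_Integration.integral_combine integrable_continuous_interval) auto
  finally show ?thesis by simp
qed

lemma derivative_of_periodic_has_integral_0:
  fixes F f :: "real \<Rightarrow> real"
  assumes "\<And>t. (F has_real_derivative f t) (at t)" "F b = F a" "a \<le> b"
  shows "(f has_integral 0) {a..b}"
proof -
  have "(f has_integral F b - F a) {a..b}"
    using assms by (intro fundamental_theorem_of_calculus)
      (auto simp: has_real_derivative_iff_has_vector_derivative[symmetric]
        intro: has_field_derivative_at_within)
  then show ?thesis using assms(2) by simp
qed

lemma signed_integral_has_real_derivative:
  fixes p :: "real \<Rightarrow> real"
  assumes "continuous_on UNIV p"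
  shows "((\<lambda>s. integral {0..s} p - integral {s..0} p) has_real_derivative p s) (at s)"
proof -
  define a where "a = - \<bar>s\<bar> - 1"
  have a: "a < s" "a \<le> 0" by (auto simp: a_def)
  have int: "p integrable_on {x..y}" for x y
    using assms by (auto intro: integrable_continuous_interval continuous_on_subset)
  have "integral {0..x} p - integral {x..0} p = integral {a..x} p - integral {a..0} p"
    if "a \<le> x" for x
    using that a Henstock_Kurzweil_Integration.integral_combine[OF _ _ int, of a 0 x]
      Henstock_Kurzweil_Integration.integral_combine[OF _ _ int, of a x 0]
    by (cases "0 < x"; cases "x = 0") auto
  moreover have "((\<lambda>x. integral {a..x} p - integral {a..0} p) has_real_derivative p s) (at s)"
  proof -
    have "((\<lambda>x. integral {a..x} p) has_real_derivative p s) (at s within {a..s+1})"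
      using a assms by (intro integral_has_real_derivative) (auto intro: continuous_on_subset)
    then show ?thesis
      using at_within_Icc_at[of a s "s+1"] a by (auto intro!: derivative_eq_intros)
  qed
  ultimately show ?thesis
    by (rule_tac has_field_derivative_transform_within_open[where S="{a<..}"]) (use a in auto)
qed

lemma expanding_map_surj:
  fixes f f' :: "real \<Rightarrow> real"
  assumes f: "\<And>s. (f has_real_derivative f' s) (at s)" and m: "0 < m" "\<And>s. m \<le> f' s"
  shows "surj f"
proof -
  have linear_growth: "f a + m * (b - a) \<le> f b" if "a \<le> b" for a b
  proof -
    have "f a - m * a \<le> f b - m * b"
    proof (rule DERIV_nonneg_imp_nondecreasing[OF that])
      fix x
      have "((\<lambda>x. f x - m * x) has_real_derivative f' x - m) (at x)"
        using f by (auto intro!: derivative_eq_intros)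
      then show "\<exists>y. ((\<lambda>x. f x - m * x) has_real_derivative y) (at x) \<and> 0 \<le> y"
        using m(2)[of x] by force
    qed
    then show ?thesis by (simp add: algebra_simps)
  qed
  have "\<exists>s. f s = t" for t
  proof -
    define a where "a = - \<bar>t - f 0\<bar> / m"
    define b where "b = \<bar>t - f 0\<bar> / m"
    have ab: "a \<le> 0" "0 \<le> b" using m by (auto simp: a_def b_def)
    have "f a \<le> f 0 + m * a" using linear_growth[OF ab(1)] by simp
    also have "\<dots> \<le> t" using m by (simp add: a_def)
    finally have "f a \<le> t" .
    moreover have "t \<le> f 0 + m * b" using m by (simp add: b_def)
    with linear_growth[OF ab(2)] have "t \<le> f b" by simp
    moreover have "isCont f x" for x using f by (rule DERIV_isCont)
    ultimately show ?thesis using IVT[of f a t b] ab by auto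
  qed
  then show ?thesis by (metis surj_def)
qed

lemma expanding_map_bij_and_inverse_derivative:
  fixes f f' :: "real \<Rightarrow> real"
  assumes f: "\<And>s. (f has_real_derivative f' s) (at s)" and m: "0 < m" "\<And>s. m \<le> f' s"
  shows "bij f" "strict_mono f" "(inv f has_real_derivative inverse (f' (inv f t))) (at t)"
proof -
  have f'_pos: "0 < f' s" for s
    using m less_le_trans by blast
  show mono: "strict_mono f"
  proof (rule strict_monoI)
    fix a b :: real assume "a < b"
    then show "f a < f b"
      by (rule DERIV_pos_imp_increasing) (use f f'_pos in blast)
  qed
  show bij: "bij f"
    using strict_mono_imp_inj_on[OF mono] expanding_map_surj[OF f m] by (simp add: bij_def)
  note inv_f = surj_f_inv_f[OF bij_is_surj[OF bij]] inv_f_f[OF bij_is_inj[OF bij]]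
  have "isCont (inv f) (f (inv f t))"
    by (rule isCont_inverse_function[where d=1]) (simp_all add: inv_f DERIV_isCont[OF f])
  then have "isCont (inv f) t" by (simp only: inv_f)
  then show "(inv f has_real_derivative inverse (f' (inv f t))) (at t)"
    by (intro DERIV_inverse_function[where f=f and a="t - 1" and b="t + 1"] f)
      (simp_all add: inv_f less_imp_neq[OF f'_pos, symmetric])
qed

lemma gronwall_nonpos:
  fixes e e' :: "real \<Rightarrow> real"
  assumes e: "\<And>t. (e has_real_derivative e' t) (at t)"
    and le: "\<And>t. t \<in> {0..T} \<Longrightarrow> e' t \<le> L * e t" and "e 0 = 0" "0 \<le> T"
  shows "e T \<le> 0"
proof -
  define g where "g t = e t * exp (- L * t)" for t
  have "g T \<le> g 0"
  proof (rule DERIV_nonpos_imp_nonincreasing[OF \<open>0 \<le> T\<close>])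
    fix t assume "0 \<le> t" "t \<le> T"
    have "(g has_real_derivative (e' t - L * e t) * exp (- L * t)) (at t)"
      unfolding g_def by (auto intro!: derivative_eq_intros e simp: algebra_simps)
    moreover have "(e' t - L * e t) * exp (- L * t) \<le> 0"
      using le[of t] \<open>0 \<le> t\<close> \<open>t \<le> T\<close> by (intro mult_nonpos_nonneg) auto
    ultimately show "\<exists>d. (g has_real_derivative d) (at t) \<and> d \<le> 0" by blast
  qed
  then show ?thesis using \<open>e 0 = 0\<close> by (simp add: g_def mult_le_0_iff)
qed

lemma autonomous_ode_unique_forward:
  fixes F :: "'a::real_inner \<Rightarrow> 'a" and x y :: "real \<Rightarrow> 'a"
  assumes lip: "\<And>B. \<exists>L. L-lipschitz_on (cball 0 B) F"
    and x: "\<And>t. (x has_vector_derivative F (x t)) (at t)"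
    and y: "\<And>t. (y has_vector_derivative F (y t)) (at t)"
    and "x 0 = y 0" "0 \<le> T"
  shows "x T = y T"
proof -
  have "continuous_on {0..T} x" "continuous_on {0..T} y"
    using x y by (auto intro!: continuous_at_imp_continuous_on has_vector_derivative_continuous)
  then have "bounded (x ` {0..T} \<union> y ` {0..T})"
    by (auto intro!: compact_imp_bounded compact_continuous_image)
  then obtain B where "\<forall>z \<in> x ` {0..T} \<union> y ` {0..T}. norm z \<le> B"
    unfolding bounded_iff by blast
  then have B: "x t \<in> cball 0 B \<and> y t \<in> cball 0 B" if "t \<in> {0..T}" for t
    using that by simp
  obtain L where L: "L-lipschitz_on (cball 0 B) F" using lip by blast
  define e where "e t = inner (x t - y t) (x t - y t)" for t
  define e' where "e' t = 2 * inner (x t - y t) (F (x t) - F (y t))" for t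
  have e_deriv: "(e has_real_derivative e' t) (at t)" for t
  proof -
    have "((\<lambda>t. x t - y t) has_derivative (\<lambda>h. h *\<^sub>R (F (x t) - F (y t)))) (at t)"
      using has_vector_derivative_diff[OF x y] by (simp add: has_vector_derivative_def)
    from has_derivative_inner[OF this this] show ?thesis
      unfolding e_def e'_def has_field_derivative_def
      by (rule has_derivative_eq_rhs) (auto simp: inner_commute algebra_simps)
  qed
  have "e' t \<le> 2 * L * e t" if "t \<in> {0..T}" for t
  proof -
    have "e' t \<le> 2 * (norm (x t - y t) * norm (F (x t) - F (y t)))"
      unfolding e'_def using norm_cauchy_schwarz by simp
    also have "\<dots> \<le> 2 * (norm (x t - y t) * (L * norm (x t - y t)))"
      using lipschitz_onD[OF L, of "x t" "y t"] B[OF that] by (intro mult_left_mono) (auto simp: dist_norm)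
    also have "\<dots> = 2 * L * e t"
      by (simp add: e_def power2_norm_eq_inner[symmetric] power2_eq_square)
    finally show ?thesis .
  qed
  moreover have "e 0 = 0" using \<open>x 0 = y 0\<close> by (simp add: e_def)
  ultimately have "e T \<le> 0" using \<open>0 \<le> T\<close> by (rule gronwall_nonpos[OF e_deriv])
  then show ?thesis by (metis e_def eq_iff_diff_eq_0 inner_gt_zero_iff not_le)
qed

lemma abs_power_diff_le:
  fixes a b M :: real
  assumes "\<bar>a\<bar> \<le> M" "\<bar>b\<bar> \<le> M"
  shows "\<bar>a^m - b^m\<bar> \<le> real m * M^(m-1) * \<bar>a - b\<bar>"
proof -
  have "\<bar>\<Sum>i<m. b^(m - Suc i) * a^i\<bar> \<le> (\<Sum>i<m. \<bar>b\<bar>^(m - Suc i) * \<bar>a\<bar>^i)"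
    using sum_abs[of "\<lambda>i. b^(m - Suc i) * a^i" "{..<m}"] by (simp add: abs_mult power_abs)
  also have "\<dots> \<le> (\<Sum>i<m. M^(m - Suc i) * M^i)"
    using assms by (intro sum_mono mult_mono power_mono) auto
  also have "\<dots> = real m * M^(m-1)"
    by (simp add: power_add[symmetric])
  finally have "\<bar>\<Sum>i<m. b^(m - Suc i) * a^i\<bar> \<le> real m * M^(m-1)" .
  then have "\<bar>a - b\<bar> * \<bar>\<Sum>i<m. b^(m - Suc i) * a^i\<bar> \<le> \<bar>a - b\<bar> * (real m * M^(m-1))"
    by (rule mult_left_mono) simp
  then show ?thesis
    by (simp add: power_diff_sumr2 abs_mult mult_ac)
qed

lemma has_vector_derivative_fst:
  "(f has_vector_derivative v) F \<Longrightarrow> ((\<lambda>x. fst (f x)) has_vector_derivative fst v) F"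
  unfolding has_vector_derivative_def by (drule has_derivative_fst) simp

section \<open>The signed square root of the potential\<close>

definition kappa :: "nat \<Rightarrow> real" where
  "kappa n = 2 / ((real n + 1) * (real n + 2))"

text \<open>\<open>W' u = u (1 - u\<^sup>n / (n + 1))\<close> has the sign of \<open>u\<close> exactly on \<open>well n\<close>; its finite
  boundary points are the saddles.\<close>

definition well :: "nat \<Rightarrow> real set" where
  "well n = {u. u^n < real n + 1}"

definition phi :: "nat \<Rightarrow> real \<Rightarrow> real" where
  "phi n u = u * sqrt (1 - kappa n * u^n)"

definition phi' :: "nat \<Rightarrow> real \<Rightarrow> real" where
  "phi' n u = (1 - u^n / (real n + 1)) / sqrt (1 - kappa n * u^n)"

text \<open>The level curve \<open>H = d\<^sub>n\<close> through the saddles has radius \<open>rmax n\<close> in the coordinates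
  \<open>(phi u, v)\<close>.\<close>

definition rmax :: "nat \<Rightarrow> real" where
  "rmax n = sqrt (2 * d_n n)"

lemma kappa_pos: "0 < kappa n"
  by (simp add: kappa_def)

lemma kappa_mult: "kappa n * (real n + 1) = 2 / (real n + 2)"
  unfolding kappa_def by (simp add: divide_simps)

lemma W_eq_kappa: "W n u = u^2 / 2 * (1 - kappa n * u^n)"
  by (simp add: W_def kappa_def field_simps power_add power2_eq_square)

lemma kappa_power_lt_1: "u \<in> well n \<Longrightarrow> kappa n * u^n < 1"
proof -
  assume "u \<in> well n"
  then have "kappa n * u^n < kappa n * (real n + 1)"
    using kappa_pos by (simp add: well_def)
  also have "\<dots> \<le> 1" by (simp add: kappa_mult)
  finally show ?thesis .
qed

lemma zero_in_well: "n \<ge> 1 \<Longrightarrow> 0 \<in> well n"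
  by (simp add: well_def power_0_left)

lemma open_well: "open (well n)"
  unfolding well_def by (intro open_Collect_less continuous_intros)

lemma well_interval:
  assumes "a \<in> well n" "b \<in> well n" "a \<le> x" "x \<le> b"
  shows "x \<in> well n"
proof (cases "0 \<le> x")
  case True
  then have "x^n \<le> b^n" using assms by (intro power_mono) auto
  then show ?thesis using assms by (simp add: well_def)
next
  case False
  show ?thesis
  proof (cases "even n")
    case True
    then have "x^n \<le> a^n"
      using False assms power_mono[of "-x" "-a" n] by simp
    then show ?thesis using assms by (simp add: well_def)
  next
    case False
    then have "x^n < 0" using \<open>\<not> 0 \<le> x\<close> by (simp add: power_less_zero_eq)
    then show ?thesis unfolding well_def mem_Collect_eq using of_nat_0_le_iff[of n] by linarith
  qed
qed

lemma phi_has_real_derivative: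
  assumes "n \<ge> 1" "kappa n * u^n < 1"
  shows "(phi n has_real_derivative phi' n u) (at u)"
proof -
  define q where "q = 1 - kappa n * u^n"
  have "0 < q" using assms by (simp add: q_def)
  have e: "u * (kappa n * (real n * u^(n-1))) = kappa n * real n * u^n"
    using assms(1) by (cases n) auto
  have "sqrt q * sqrt q = q" using \<open>0 < q\<close> by simp
  then have "sqrt q - u * (kappa n * (real n * u^(n-1))) / (2 * sqrt q)
      = (2 * q - kappa n * real n * u^n) / (2 * sqrt q)"
    unfolding e using \<open>0 < q\<close> by (simp add: field_simps)
  also have "2 * q - kappa n * real n * u^n = 2 - kappa n * (real n + 2) * u^n"
    by (simp add: q_def algebra_simps)
  also have "kappa n * (real n + 2) = 2 / (real n + 1)"
    unfolding kappa_def by (simp add: divide_simps)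
  also have "2 - 2 / (real n + 1) * u^n = 2 * (1 - u^n / (real n + 1))"
    by simp
  also have "2 * (1 - u^n / (real n + 1)) / (2 * sqrt q) = phi' n u"
    unfolding phi'_def q_def by (rule mult_divide_mult_cancel_left) simp
  finally have "sqrt q - u * (kappa n * (real n * u^(n-1))) / (2 * sqrt q) = phi' n u" .
  moreover have "(phi n has_real_derivative
      sqrt q - u * (kappa n * (real n * u^(n-1))) / (2 * sqrt q)) (at u)"
    unfolding phi_def[abs_def] using \<open>0 < q\<close>
    by (auto intro!: derivative_eq_intros simp: q_def field_simps)
  ultimately show ?thesis by simp
qed

lemma phi'_pos: "u \<in> well n \<Longrightarrow> 0 < phi' n u"
  using kappa_power_lt_1[of u n] by (simp add: phi'_def well_def)

lemma phi_squared: "kappa n * u^n \<le> 1 \<Longrightarrow> (phi n u)^2 = 2 * W n u"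
  by (simp add: phi_def W_eq_kappa power_mult_distrib)

lemma phi_mult_phi':
  "kappa n * u^n < 1 \<Longrightarrow> phi n u * phi' n u = u - u^(n+1) / (real n + 1)"
proof -
  assume "kappa n * u^n < 1"
  then have "sqrt (1 - kappa n * u^n) \<noteq> 0" by simp
  then have "phi n u * phi' n u = u * (1 - u^n / (real n + 1))"
    by (simp add: phi_def phi'_def)
  also have "\<dots> = u - u^(n+1) / (real n + 1)"
    by (simp add: field_simps)
  finally show ?thesis .
qed

lemma sgn_phi: "u \<in> well n \<Longrightarrow> sgn (phi n u) = sgn u"
  using kappa_power_lt_1[of u n] by (simp add: phi_def sgn_mult)

lemma phi_strict_mono_on:
  assumes "n \<ge> 1"
  shows "strict_mono_on (well n) (phi n)"
proof (rule strict_mono_onI)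
  fix a b assume ab: "a \<in> well n" "b \<in> well n" "a < b"
  show "phi n a < phi n b"
  proof (rule DERIV_pos_imp_increasing[OF \<open>a < b\<close>])
    fix x assume "a \<le> x" "x \<le> b"
    then have "x \<in> well n" using ab well_interval by blast
    then show "\<exists>y. (phi n has_real_derivative y) (at x) \<and> 0 < y"
      using phi_has_real_derivative[OF assms kappa_power_lt_1] phi'_pos by blast
  qed
qed

lemma phi_continuous_on:
  "(\<And>u. u \<in> S \<Longrightarrow> kappa n * u^n \<le> 1) \<Longrightarrow> continuous_on S (phi n)"
  unfolding phi_def by (auto intro!: continuous_intros)

lemma phi_le_self: "u \<le> 0 \<Longrightarrow> u^n \<le> 0 \<Longrightarrow> phi n u \<le> u"
  using kappa_pos[of n] mult_left_mono_neg[of 1 "sqrt (1 - kappa n * u^n)" u]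
  by (simp add: phi_def mult_nonneg_nonpos)

lemma phi_less_self: "0 < u \<Longrightarrow> u \<in> well n \<Longrightarrow> phi n u < u"
  using kappa_power_lt_1[of u n] kappa_pos[of n] by (simp add: phi_def)

definition saddle :: "nat \<Rightarrow> real" where
  "saddle n = (real n + 1) powr (1 / real n)"

lemma saddle_pos: "0 < saddle n"
  by (simp add: saddle_def)

lemma saddle_power: "n \<ge> 1 \<Longrightarrow> saddle n ^ n = real n + 1"
  by (simp add: saddle_def powr_powr flip: powr_realpow)

lemma phi_saddle:
  assumes "n \<ge> 1"
  shows "phi n (saddle n) = rmax n"
proof -
  define s where "s = saddle n"
  have "s^n = real n + 1" "s^2 = (real n + 1) powr (2 / real n)"
    using assms saddle_power by (simp_all add: s_def saddle_def powr_powr flip: powr_realpow)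
  then have "kappa n * s^n = 2 / (real n + 2)" by (simp add: kappa_mult)
  then have "(phi n s)^2 = 2 * W n s" by (intro phi_squared) simp
  also have "\<dots> = s^2 * (1 - kappa n * s^n)" by (simp add: W_eq_kappa)
  also have "\<dots> = s^2 * real n / (real n + 2)"
    unfolding \<open>kappa n * s^n = _\<close> by (simp add: field_simps)
  also have "\<dots> = (rmax n)^2"
    using \<open>s^2 = _\<close> by (simp add: rmax_def d_n_def field_simps)
  finally have "(phi n s)^2 = (rmax n)^2" .
  moreover have "0 \<le> phi n s"
    using \<open>kappa n * s^n = _\<close> saddle_pos[of n] by (simp add: phi_def s_def)
  moreover have "0 \<le> rmax n" by (simp add: rmax_def d_n_def)
  ultimately show ?thesis by (simp add: power2_eq_iff_nonneg s_def)
qed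

lemma rmax_pos: "n \<ge> 1 \<Longrightarrow> 0 < rmax n"
  by (simp add: rmax_def d_n_def)

lemma nonneg_in_phi_image:
  assumes "n \<ge> 1" "0 \<le> w" "w < rmax n"
  shows "w \<in> phi n ` well n"
proof -
  define s where "s = saddle n"
  have "s^n = real n + 1" "0 < s"
    using saddle_power[OF assms(1)] saddle_pos by (simp_all add: s_def)
  have "kappa n * u^n \<le> 1" if "u \<in> {0..s}" for u
  proof -
    have "u^n \<le> s^n" using that by (intro power_mono) auto
    then have "kappa n * u^n \<le> kappa n * (real n + 1)"
      using \<open>s^n = _\<close> kappa_pos[of n] by simp
    also have "\<dots> \<le> 1" by (simp add: kappa_mult)
    finally show ?thesis .
  qed
  then have "continuous_on {0..s} (phi n)" by (rule phi_continuous_on)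
  moreover have "phi n 0 \<le> w" "w \<le> phi n s"
    using assms phi_saddle[OF assms(1)] by (simp_all add: phi_def s_def)
  ultimately obtain u where u: "0 \<le> u" "u \<le> s" "phi n u = w"
    using IVT'[of "phi n" 0 w s] \<open>0 < s\<close> by auto
  then have "u \<noteq> s" using phi_saddle[OF assms(1)] assms by (auto simp: s_def)
  then have "u^n < s^n" using u assms by (intro power_strict_mono) auto
  then show ?thesis using u \<open>s^n = _\<close> by (auto simp: well_def)
qed

lemma phi_image_well:
  assumes "n \<ge> 1"
  shows "{- rmax n<..<rmax n} \<subseteq> phi n ` well n"
proof
  fix w assume w: "w \<in> {- rmax n<..<rmax n}"
  consider "0 \<le> w" | "w < 0" "even n" | "w < 0" "odd n" by linarith
  then show "w \<in> phi n ` well n"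
  proof cases
    case 1
    then show ?thesis using nonneg_in_phi_image assms w by simp
  next
    case 2
    then obtain u where "u \<in> well n" "phi n u = - w"
      using nonneg_in_phi_image[OF assms, of "- w"] w by auto
    then show ?thesis
      using \<open>even n\<close> by (intro image_eqI[of _ _ "- u"]) (auto simp: phi_def well_def)
  next
    case 3
    have neg: "u^n \<le> 0" if "u \<le> 0" for u :: real
      using \<open>odd n\<close> odd_pos that by (simp add: power_le_zero_eq)
    have "phi n (- rmax n) \<le> w"
      using phi_le_self[of "- rmax n" n] neg[of "- rmax n"] rmax_pos[OF assms] w by simp
    moreover have "w \<le> phi n 0" using 3 by (simp add: phi_def)
    moreover have "continuous_on {- rmax n..0} (phi n)"
    proof (rule phi_continuous_on)
      fix u assume "u \<in> {- rmax n..0}"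
      then have "kappa n * u^n \<le> 0"
        using neg[of u] kappa_pos[of n] by (simp add: mult_nonneg_nonpos)
      then show "kappa n * u^n \<le> 1" by simp
    qed
    ultimately obtain u where u: "- rmax n \<le> u" "u \<le> 0" "phi n u = w"
      using IVT'[of "phi n" "- rmax n" w 0] rmax_pos[OF assms] by auto
    moreover have "u \<in> well n"
      using neg[OF u(2)] of_nat_0_le_iff[of n] by (simp add: well_def)
    ultimately show ?thesis by blast
  qed
qed

definition psi :: "nat \<Rightarrow> real \<Rightarrow> real" where
  "psi n w = (THE u. u \<in> well n \<and> phi n u = w)"

definition psi' :: "nat \<Rightarrow> real \<Rightarrow> real" where
  "psi' n w = 1 / phi' n (psi n w)"

context
  fixes n :: nat
  assumes n: "n \<ge> 1"
begin

lemma psi_phi: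
  assumes u: "u \<in> well n"
  shows "psi n (phi n u) = u"
  unfolding psi_def
proof (rule the_equality)
  show "u \<in> well n \<and> phi n u = phi n u" using u by simp
  fix y assume "y \<in> well n \<and> phi n y = phi n u"
  then show "y = u" using strict_mono_on_eqD[OF phi_strict_mono_on[OF n]] u by blast
qed

lemma psi_in_well:
  assumes "w \<in> {- rmax n<..<rmax n}"
  shows "psi n w \<in> well n" "phi n (psi n w) = w"
proof -
  obtain u where "u \<in> well n" "w = phi n u"
    using phi_image_well[OF n] assms by blast
  then show "psi n w \<in> well n" "phi n (psi n w) = w" by (simp_all add: psi_phi)
qed

lemma psi_0: "psi n 0 = 0"
  using psi_phi[OF zero_in_well[OF n]] by (simp add: phi_def)

lemma sgn_psi: "w \<in> {- rmax n<..<rmax n} \<Longrightarrow> sgn (psi n w) = sgn w"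
  using sgn_phi[OF psi_in_well(1)] psi_in_well(2) by simp

lemma psi'_pos: "w \<in> {- rmax n<..<rmax n} \<Longrightarrow> 0 < psi' n w"
  using phi'_pos[OF psi_in_well(1)] by (simp add: psi'_def)

lemma isCont_psi:
  assumes w: "w \<in> {- rmax n<..<rmax n}"
  shows "isCont (psi n) w"
proof -
  define u where "u = psi n w"
  obtain e where "0 < e" "ball u e \<subseteq> well n"
    using open_well[of n] psi_in_well(1)[OF w] unfolding open_contains_ball u_def by blast
  then have near: "z \<in> well n" if "u - e/2 \<le> z" "z \<le> u + e/2" for z
    using that by (auto simp: dist_real_def)
  have "isCont (psi n) (phi n u)"
  proof (rule isCont_inverse_function2[of "u - e/2" u "u + e/2"])
    show "u - e/2 < u" "u < u + e/2" using \<open>0 < e\<close> by simp_all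
    fix z assume "u - e/2 \<le> z" "z \<le> u + e/2"
    then have "z \<in> well n" by (rule near)
    then show "psi n (phi n z) = z" "isCont (phi n) z"
      by (simp_all add: psi_phi DERIV_isCont[OF phi_has_real_derivative[OF n kappa_power_lt_1]])
  qed
  then show ?thesis using psi_in_well(2)[OF w] by (simp add: u_def)
qed

lemma psi_has_real_derivative:
  assumes w: "w \<in> {- rmax n<..<rmax n}"
  shows "(psi n has_real_derivative psi' n w) (at w)"
proof -
  have "(psi n has_real_derivative inverse (phi' n (psi n w))) (at w)"
  proof (rule DERIV_inverse_function[where f="phi n" and a="- rmax n" and b="rmax n"])
    show "(phi n has_real_derivative phi' n (psi n w)) (at (psi n w))"
      using phi_has_real_derivative[OF n kappa_power_lt_1[OF psi_in_well(1)[OF w]]] .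
    show "phi' n (psi n w) \<noteq> 0" using phi'_pos[OF psi_in_well(1)[OF w]] by simp
    show "phi n (psi n y) = y" if "- rmax n < y" "y < rmax n" for y
      using psi_in_well(2) that by simp
  qed (use w isCont_psi[OF w] in auto)
  then show ?thesis by (simp add: psi'_def inverse_eq_divide)
qed

lemma continuous_on_psi: "continuous_on {- rmax n<..<rmax n} (psi n)"
  using isCont_psi by (simp add: continuous_at_imp_continuous_on)

lemma continuous_on_psi': "continuous_on {- rmax n<..<rmax n} (psi' n)"
proof -
  have "continuous_on {u. kappa n * u^n < 1} (phi' n)"
    unfolding phi'_def by (intro continuous_intros) auto
  then have "continuous_on {- rmax n<..<rmax n} (\<lambda>w. phi' n (psi n w))"
    using psi_in_well(1) kappa_power_lt_1
    by (intro continuous_on_compose2[OF _ continuous_on_psi]) auto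
  then show ?thesis
    unfolding psi'_def using phi'_pos[OF psi_in_well(1)]
    by (intro continuous_intros) (auto simp: less_imp_neq[symmetric])
qed

end

lemma phi'_le_1:
  assumes "u \<in> well n" "0 \<le> u^n"
  shows "phi' n u \<le> 1"
proof -
  define x where "x = u^n / (real n + 1)"
  have x: "0 \<le> x" "x < 1" using assms by (simp_all add: x_def well_def)
  have "kappa n * u^n = 2 * x / (real n + 2)"
    by (simp add: x_def kappa_def field_simps)
  also have "\<dots> \<le> x" using x by (simp add: field_simps)
  moreover have "x * x \<le> x" using x by (simp add: mult_left_le)
  ultimately have "(1 - x)^2 \<le> 1 - kappa n * u^n"
    by (simp add: power2_eq_square algebra_simps)
  then have "1 - x \<le> sqrt (1 - kappa n * u^n)" by (rule real_le_rsqrt)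
  moreover have "0 < sqrt (1 - kappa n * u^n)" using kappa_power_lt_1[OF assms(1)] by simp
  ultimately show ?thesis by (simp add: phi'_def x_def)
qed

lemma phi'_ge_1:
  assumes "u^n \<le> 0"
  shows "1 \<le> phi' n u"
proof -
  define x where "x = u^n / (real n + 1)"
  have "x \<le> 0" using assms by (simp add: x_def divide_nonpos_nonneg)
  have "kappa n * u^n = 2 * x / (real n + 2)"
    by (simp add: x_def kappa_def field_simps)
  also have "\<dots> \<ge> 2 * x"
    using \<open>x \<le> 0\<close> mult_nonpos_nonneg[of x "real n"] by (simp add: field_simps)
  finally have "1 - kappa n * u^n \<le> (1 - x)^2"
    by (simp add: power2_eq_square algebra_simps) (smt (verit) zero_le_square)
  then have "sqrt (1 - kappa n * u^n) \<le> 1 - x"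
    using \<open>x \<le> 0\<close> real_sqrt_le_mono by fastforce
  moreover have "kappa n * u^n \<le> 0"
    using assms kappa_pos[of n] by (simp add: mult_nonneg_nonpos)
  then have "0 < sqrt (1 - kappa n * u^n)" by simp
  ultimately have "1 \<le> (1 - x) / sqrt (1 - kappa n * u^n)" by (simp only: le_divide_eq_1_pos)
  then show ?thesis unfolding phi'_def x_def .
qed

lemma psi_asymmetry_odd:
  assumes n: "n \<ge> 1" "odd n" and w: "0 < w" "w < rmax n"
  shows "- psi n (- w) < psi n w" "psi' n (- w) \<le> 1" "1 \<le> psi' n w"
proof -
  define a b where "a = psi n w" and "b = psi n (- w)"
  have ws: "w \<in> {- rmax n<..<rmax n}" "- w \<in> {- rmax n<..<rmax n}" using w by auto
  have "0 < a" "b < 0" using sgn_psi[OF n(1) ws(1)] sgn_psi[OF n(1) ws(2)] w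
    by (simp_all add: a_def b_def sgn_if split: if_splits)
  have "a \<in> well n" using psi_in_well(1)[OF n(1) ws(1)] by (simp add: a_def)
  have "b^n \<le> 0" using \<open>b < 0\<close> \<open>odd n\<close> by (simp add: power_le_zero_eq odd_pos)
  have "w < a" using phi_less_self[OF \<open>0 < a\<close> \<open>a \<in> well n\<close>] psi_in_well(2)[OF n(1) ws(1)]
    by (simp add: a_def)
  moreover have "- w \<le> b" using phi_le_self[of b n] \<open>b < 0\<close> \<open>b^n \<le> 0\<close> psi_in_well(2)[OF n(1) ws(2)]
    by (simp add: b_def)
  ultimately show "- psi n (- w) < psi n w" by (simp add: a_def b_def)
  show "psi' n (- w) \<le> 1"
    using phi'_ge_1[OF \<open>b^n \<le> 0\<close>] by (simp add: psi'_def b_def)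
  show "1 \<le> psi' n w"
    using phi'_le_1[OF \<open>a \<in> well n\<close>] phi'_pos[OF \<open>a \<in> well n\<close>] \<open>0 < a\<close>
    by (simp add: psi'_def a_def)
qed

lemma psi_power_psi'_symmetric_sum_pos:
  assumes n: "n \<ge> 1" and k: "even k \<longleftrightarrow> even n" and w: "0 < w" "w < rmax n"
  shows "0 < psi n w ^ k * psi' n w + psi n (- w) ^ k * psi' n (- w)"
proof -
  define a b where "a = psi n w" and "b = psi n (- w)"
  have ws: "w \<in> {- rmax n<..<rmax n}" "- w \<in> {- rmax n<..<rmax n}" using w by auto
  have "0 < a" "b < 0" using sgn_psi[OF n ws(1)] sgn_psi[OF n ws(2)] w
    by (simp_all add: a_def b_def sgn_if split: if_splits)
  have pa: "0 < psi' n w" and pb: "0 < psi' n (- w)" using psi'_pos[OF n] ws by auto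
  show ?thesis
  proof (cases "even n")
    case True
    then have "0 \<le> b ^ k * psi' n (- w)" using k pb by (simp add: zero_le_even_power)
    moreover have "0 < a ^ k * psi' n w" using \<open>0 < a\<close> pa by simp
    ultimately show ?thesis by (simp add: a_def b_def)
  next
    case False
    note asym = psi_asymmetry_odd[OF n False w]
    have "odd k" using k False by simp
    have "(- b) ^ k * psi' n (- w) \<le> (- b) ^ k"
      using asym(2) \<open>b < 0\<close> by (simp add: mult_left_le)
    also have "\<dots> < a ^ k"
      using asym(1) \<open>b < 0\<close> odd_pos[OF \<open>odd k\<close>] by (intro power_strict_mono) (simp_all add: a_def b_def)
    also have "\<dots> \<le> a ^ k * psi' n w" using asym(3) \<open>0 < a\<close> by (simp add: a_def)
    finally show ?thesis using \<open>odd k\<close> by (simp add: a_def b_def)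
  qed
qed

section \<open>Angle coordinates and Abelian integrals\<close>

text \<open>On the level curve \<open>H = r\<^sup>2/2\<close>: \<open>time_density\<close> is \<open>dt/d\<theta>\<close> along the flow,
  \<open>Ik n k r = \<oint> u\<^sup>k v du\<close> and \<open>Jk n k r = \<oint> u\<^sup>k du / v\<close>.\<close>

definition orbit_u :: "nat \<Rightarrow> real \<Rightarrow> real \<Rightarrow> real" where
  "orbit_u n r \<theta> = psi n (r * sin \<theta>)"

definition time_density :: "nat \<Rightarrow> real \<Rightarrow> real \<Rightarrow> real" where
  "time_density n r \<theta> = psi' n (r * sin \<theta>)"

definition Ik :: "nat \<Rightarrow> nat \<Rightarrow> real \<Rightarrow> real" where
  "Ik n k r = integral {0..2*pi} (\<lambda>\<theta>. orbit_u n r \<theta> ^ k * (r * cos \<theta>)^2 * time_density n r \<theta>)"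

definition Jk :: "nat \<Rightarrow> nat \<Rightarrow> real \<Rightarrow> real" where
  "Jk n k r = integral {0..2*pi} (\<lambda>\<theta>. orbit_u n r \<theta> ^ k * time_density n r \<theta>)"

text \<open>Unlike \<open>Ik\<close>, \<open>Sk\<close> can be differentiated in \<open>r\<close> using only \<open>psi'\<close>; the two are related by
  \<open>Ik_eq_Sk\<close>.\<close>

definition Sk :: "nat \<Rightarrow> nat \<Rightarrow> real \<Rightarrow> real" where
  "Sk n k r = integral {0..2*pi} (\<lambda>\<theta>. orbit_u n r \<theta> ^ (k+1) * sin \<theta>)"

lemma abs_mult_sin_le:
  fixes r \<theta> :: real
  shows "0 \<le> r \<Longrightarrow> \<bar>r * sin \<theta>\<bar> \<le> r"
  using abs_sin_le_one[of \<theta>] by (simp add: abs_mult mult_left_le)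

lemma r_sin_in_range:
  fixes r R \<theta> :: real
  assumes "0 \<le> r" "r < R"
  shows "r * sin \<theta> \<in> {- R<..<R}"
  using abs_mult_sin_le[OF assms(1), of \<theta>] assms(2) by (auto simp: abs_le_iff)

context
  fixes n :: nat and r :: real
  assumes n: "n \<ge> 1" and r: "0 \<le> r" "r < rmax n"
begin

lemma orbit_u_in_well: "orbit_u n r \<theta> \<in> well n"
  and phi_orbit_u: "phi n (orbit_u n r \<theta>) = r * sin \<theta>"
  using psi_in_well[OF n r_sin_in_range[OF r]] by (simp_all add: orbit_u_def)

lemma time_density_pos: "0 < time_density n r \<theta>"
  using psi'_pos[OF n r_sin_in_range[OF r]] by (simp add: time_density_def)

lemma orbit_u_has_real_derivative:
  "(orbit_u n r has_real_derivative time_density n r \<theta> * (r * cos \<theta>)) (at \<theta>)"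
  unfolding orbit_u_def[abs_def] time_density_def
  by (rule DERIV_chain2[where f="psi n" and g="\<lambda>\<theta>. r * sin \<theta>",
        OF psi_has_real_derivative[OF n r_sin_in_range[OF r]]])
    (auto intro!: derivative_eq_intros)

lemma continuous_on_orbit_u [continuous_intros]:
  "continuous_on S f \<Longrightarrow> continuous_on S (\<lambda>x. orbit_u n r (f x))"
proof -
  have "continuous_on UNIV (orbit_u n r)"
    unfolding orbit_u_def[abs_def]
    by (rule continuous_on_compose2[OF continuous_on_psi[OF n]])
      (auto intro!: continuous_intros r_sin_in_range r)
  then show "continuous_on S f \<Longrightarrow> continuous_on S (\<lambda>x. orbit_u n r (f x))"
    by (rule continuous_on_compose2) auto
qed

lemma continuous_on_time_density [continuous_intros]:
  "continuous_on S f \<Longrightarrow> continuous_on S (\<lambda>x. time_density n r (f x))"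
proof -
  have "continuous_on UNIV (time_density n r)"
    unfolding time_density_def[abs_def]
    by (rule continuous_on_compose2[OF continuous_on_psi'[OF n]])
      (auto intro!: continuous_intros r_sin_in_range r)
  then show "continuous_on S f \<Longrightarrow> continuous_on S (\<lambda>x. time_density n r (f x))"
    by (rule continuous_on_compose2) auto
qed

lemma orbit_energy: "(r * cos \<theta>)^2 / 2 + W n (orbit_u n r \<theta>) = r^2 / 2"
proof -
  have "2 * W n (orbit_u n r \<theta>) = (r * sin \<theta>)^2"
    using phi_squared[of n] kappa_power_lt_1[OF orbit_u_in_well] phi_orbit_u by (metis less_imp_le)
  then show ?thesis
    by (simp add: power_mult_distrib cos_squared_eq field_simps)
qed

lemma orbit_r_sin:
  "r * sin \<theta> = (orbit_u n r \<theta> - orbit_u n r \<theta> ^ (n+1) / (real n + 1)) * time_density n r \<theta>"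
proof -
  define u where "u = orbit_u n r \<theta>"
  have "phi' n u \<noteq> 0" using phi'_pos[OF orbit_u_in_well[of \<theta>]] by (simp add: u_def)
  have "r * sin \<theta> = phi n u * phi' n u / phi' n u"
    using phi_orbit_u \<open>phi' n u \<noteq> 0\<close> by (simp add: u_def)
  also have "\<dots> = (u - u^(n+1) / (real n + 1)) * time_density n r \<theta>"
    using phi_mult_phi'[OF kappa_power_lt_1[OF orbit_u_in_well]]
    by (simp add: u_def time_density_def psi'_def orbit_u_def)
  finally show ?thesis by (simp add: u_def)
qed

end

context
  fixes n :: nat and r :: real
  assumes n: "n \<ge> 1" and r: "0 \<le> r" "r < rmax n"
begin

lemma has_integral_Ik:
  "((\<lambda>\<theta>. orbit_u n r \<theta> ^ k * (r * cos \<theta>)^2 * time_density n r \<theta>) has_integral Ik n k r) {0..2*pi}"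
  unfolding Ik_def using n r
  by (intro integrable_integral integrable_continuous_interval continuous_intros)

lemma has_integral_Jk:
  "((\<lambda>\<theta>. orbit_u n r \<theta> ^ k * time_density n r \<theta>) has_integral Jk n k r) {0..2*pi}"
  unfolding Jk_def using n r
  by (intro integrable_integral integrable_continuous_interval continuous_intros)

lemma has_integral_Sk:
  "((\<lambda>\<theta>. orbit_u n r \<theta> ^ (k+1) * sin \<theta>) has_integral Sk n k r) {0..2*pi}"
  unfolding Sk_def using n r
  by (intro integrable_integral integrable_continuous_interval continuous_intros)

lemma Ik_eq_Sk: "real (k+1) * Ik n k r = r * Sk n k r"
proof -
  let ?u = "orbit_u n r" and ?p = "time_density n r"
  have "((\<lambda>\<theta>. real (k+1) * (?u \<theta> ^ k * (r * cos \<theta>)^2 * ?p \<theta>) - r * (?u \<theta> ^ (k+1) * sin \<theta>))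
      has_integral 0) {0..2*pi}"
  proof (rule derivative_of_periodic_has_integral_0)
    show "((\<lambda>\<theta>. r * (?u \<theta> ^ (k+1) * cos \<theta>)) has_real_derivative
        real (k+1) * (?u \<theta> ^ k * (r * cos \<theta>)^2 * ?p \<theta>) - r * (?u \<theta> ^ (k+1) * sin \<theta>)) (at \<theta>)"
      for \<theta>
      by (rule derivative_eq_intros orbit_u_has_real_derivative[OF n r] refl)+
        (simp add: power2_eq_square algebra_simps)
  qed (simp_all add: orbit_u_def)
  moreover have "((\<lambda>\<theta>. real (k+1) * (?u \<theta> ^ k * (r * cos \<theta>)^2 * ?p \<theta>) - r * (?u \<theta> ^ (k+1) * sin \<theta>))
      has_integral (real (k+1) * Ik n k r - r * Sk n k r)) {0..2*pi}"
    by (intro has_integral_diff has_integral_mult_right has_integral_Ik has_integral_Sk)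
  ultimately have "0 = real (k+1) * Ik n k r - r * Sk n k r" by (rule has_integral_unique)
  then show ?thesis by simp
qed

lemma Sk_eq_Jk: "r * Sk n k r = Jk n (k+2) r - Jk n (k+n+2) r / (real n + 1)"
proof -
  let ?u = "orbit_u n r" and ?p = "time_density n r"
  have "((\<lambda>\<theta>. r * (?u \<theta> ^ (k+1) * sin \<theta>)) has_integral r * Sk n k r) {0..2*pi}"
    by (intro has_integral_mult_right has_integral_Sk)
  moreover have "((\<lambda>\<theta>. r * (?u \<theta> ^ (k+1) * sin \<theta>)) has_integral
      Jk n (k+2) r - Jk n (k+n+2) r / (real n + 1)) {0..2*pi}"
  proof (rule has_integral_eq[OF _ has_integral_diff[OF has_integral_Jk has_integral_divide[OF has_integral_Jk]]])
    fix \<theta>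
    have "r * (?u \<theta> ^ (k+1) * sin \<theta>) = ?u \<theta> ^ (k+1) * (r * sin \<theta>)" by simp
    also have "\<dots> = ?u \<theta> ^ (k+1) * ((?u \<theta> - ?u \<theta> ^ (n+1) / (real n + 1)) * ?p \<theta>)"
      by (simp only: orbit_r_sin[OF n r])
    also have "\<dots> = ?u \<theta> ^ (k+2) * ?p \<theta> - ?u \<theta> ^ (k+n+2) * ?p \<theta> / (real n + 1)"
      unfolding power_add by (simp add: algebra_simps power2_eq_square)
    finally show "?u \<theta> ^ (k+2) * ?p \<theta> - ?u \<theta> ^ (k+n+2) * ?p \<theta> / (real n + 1)
        = r * (?u \<theta> ^ (k+1) * sin \<theta>)" by simp
  qed
  ultimately show ?thesis by (rule has_integral_unique)
qed

lemma Jk_energy: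
  "r^2 * Jk n k r = Ik n k r + Jk n (k+2) r - 2 * Jk n (k+n+2) r / ((real n + 1) * (real n + 2))"
proof -
  let ?u = "orbit_u n r" and ?p = "time_density n r"
  have "((\<lambda>\<theta>. r^2 * (?u \<theta> ^ k * ?p \<theta>)) has_integral r^2 * Jk n k r) {0..2*pi}"
    by (intro has_integral_mult_right has_integral_Jk)
  moreover have "((\<lambda>\<theta>. r^2 * (?u \<theta> ^ k * ?p \<theta>)) has_integral
      Ik n k r + Jk n (k+2) r - 2 * Jk n (k+n+2) r / ((real n + 1) * (real n + 2))) {0..2*pi}"
  proof (rule has_integral_eq[OF _ has_integral_diff[OF has_integral_add[OF has_integral_Ik has_integral_Jk]
          has_integral_divide[OF has_integral_mult_right[OF has_integral_Jk]]]])
    fix \<theta>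
    have r2: "r^2 = (r * cos \<theta>)^2 + ?u \<theta> ^ 2 - 2 * ?u \<theta> ^ (n+2) / ((real n + 1) * (real n + 2))"
      using orbit_energy[OF n r, of \<theta>] by (simp add: W_def field_simps)
    show "?u \<theta> ^ k * (r * cos \<theta>)^2 * ?p \<theta> + ?u \<theta> ^ (k+2) * ?p \<theta>
        - 2 * (?u \<theta> ^ (k+n+2) * ?p \<theta>) / ((real n + 1) * (real n + 2)) = r^2 * (?u \<theta> ^ k * ?p \<theta>)"
      unfolding r2 by (simp add: algebra_simps power_add power2_eq_square)
  qed
  ultimately show ?thesis by (rule has_integral_unique)
qed

lemma Ik_eq_Jk: "real (k+1) * Ik n k r = Jk n (k+2) r - Jk n (k+n+2) r / (real n + 1)"
  using Ik_eq_Sk Sk_eq_Jk by simp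

lemma Jk_0_eq:
  "r^2 / 2 * Jk n 0 r = Ik n 0 r + real n / (2 * (real n + 1) * (real n + 2)) * Jk n (n+2) r"
proof -
  have nz: "real n + 1 \<noteq> 0" "real n + 2 \<noteq> 0" by simp_all
  define J2 where "J2 = Jk n (0+2) r"
  have J2: "J2 = Ik n 0 r + Jk n (n+2) r / (real n + 1)"
    using Ik_eq_Jk[of 0] unfolding J2_def by simp
  have "r^2 * Jk n 0 r = Ik n 0 r + J2 - 2 * Jk n (n+2) r / ((real n + 1) * (real n + 2))"
    using Jk_energy[of 0] unfolding J2_def by simp
  then show ?thesis
    unfolding J2 using nz by (simp add: divide_simps) (simp add: algebra_simps)
qed

lemma Jk_n_eq:
  "r^2 / 2 * Jk n n r = (1 + real n / (2 * (real n + 2))) * Ik n n r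
      + real n / (2 * (real n + 2)) * Jk n (n+2) r"
proof -
  have nz: "real n + 1 \<noteq> 0" "real n + 2 \<noteq> 0" by simp_all
  define Q where "Q = Jk n (n+n+2) r"
  have Q: "Q = (real n + 1) * (Jk n (n+2) r - (real n + 1) * Ik n n r)"
    using Ik_eq_Jk[of n] unfolding Q_def by (simp add: field_simps)
  have "r^2 * Jk n n r = Ik n n r + Jk n (n+2) r - 2 * Q / ((real n + 1) * (real n + 2))"
    using Jk_energy[of n] unfolding Q_def by simp
  then show ?thesis
    unfolding Q using nz by (simp add: divide_simps) (simp add: algebra_simps)
qed

end

context
  fixes n :: nat
  assumes n: "n \<ge> 1"
begin

lemma psi_scaled_power_has_real_derivative:
  assumes "x * s \<in> {- rmax n<..<rmax n}"
  shows "((\<lambda>x. psi n (x * s) ^ (k+1) * s) has_real_derivative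
      real (k+1) * (psi n (x * s) ^ k * psi' n (x * s) * s^2)) (at x)"
proof -
  have "((\<lambda>x. x * s) has_real_derivative s) (at x)"
    using DERIV_cmult_right[OF DERIV_ident, of s x] by simp
  from DERIV_chain2[where f="psi n", OF psi_has_real_derivative[OF n assms] this]
  have "((\<lambda>x. psi n (x * s)) has_real_derivative psi' n (x * s) * s) (at x)" .
  from DERIV_mult[OF DERIV_power[OF this, of "k+1"] DERIV_const[of s]]
  show ?thesis by (rule DERIV_cong) (simp add: power2_eq_square algebra_simps)
qed

lemma Sk_has_real_derivative:
  assumes r: "0 < r" "r < rmax n"
  shows "(Sk n k has_real_derivative
      real (k+1) * integral {0..2*pi} (\<lambda>\<theta>. orbit_u n r \<theta> ^ k * time_density n r \<theta> * (sin \<theta>)^2)) (at r)"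
proof -
  define U where "U = {0<..<rmax n}"
  have in_range: "x * sin \<theta> \<in> {- rmax n<..<rmax n}" if "x \<in> U" for x \<theta>
    using that r_sin_in_range[of x "rmax n" \<theta>] by (simp add: U_def)
  define f' where "f' x \<theta> = real (k+1) * (psi n (x * sin \<theta>) ^ k * psi' n (x * sin \<theta>) * (sin \<theta>)^2)"
    for x \<theta>
  have "((\<lambda>x. integral (cbox 0 (2*pi)) (\<lambda>\<theta>. psi n (x * sin \<theta>) ^ (k+1) * sin \<theta>))
      has_field_derivative integral (cbox 0 (2*pi)) (f' r)) (at r within U)"
  proof (rule leibniz_rule_field_derivative)
    fix x \<theta> assume "x \<in> U"
    show "((\<lambda>x. psi n (x * sin \<theta>) ^ (k+1) * sin \<theta>) has_field_derivative f' x \<theta>) (at x within U)"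
      unfolding f'_def
      by (rule has_field_derivative_at_within[OF psi_scaled_power_has_real_derivative[OF in_range[OF \<open>x \<in> U\<close>]]])
  next
    fix x assume "x \<in> U"
    have "continuous_on {0..2*pi} (\<lambda>\<theta>. psi n (x * sin \<theta>))"
      by (rule continuous_on_compose2[OF continuous_on_psi[OF n]])
        (use in_range[OF \<open>x \<in> U\<close>] in \<open>auto intro!: continuous_intros\<close>)
    then show "(\<lambda>\<theta>. psi n (x * sin \<theta>) ^ (k+1) * sin \<theta>) integrable_on cbox 0 (2*pi)"
      unfolding cbox_interval by (intro integrable_continuous_interval continuous_intros)
  next
    have "continuous_on (U \<times> cbox 0 (2*pi)) (\<lambda>z. psi n (fst z * sin (snd z)))"
      by (rule continuous_on_compose2[OF continuous_on_psi[OF n]])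
        (auto intro!: continuous_intros dest: in_range)
    moreover have "continuous_on (U \<times> cbox 0 (2*pi)) (\<lambda>z. psi' n (fst z * sin (snd z)))"
      by (rule continuous_on_compose2[OF continuous_on_psi'[OF n]])
        (auto intro!: continuous_intros dest: in_range)
    ultimately show "continuous_on (U \<times> cbox 0 (2*pi)) (\<lambda>(x, \<theta>). f' x \<theta>)"
      unfolding f'_def split_beta by (intro continuous_intros)
  next
    show "r \<in> U" "convex U" using r by (simp_all add: U_def)
  qed
  moreover have "at r within U = at r" using r by (intro at_within_open) (simp_all add: U_def)
  ultimately have "(Sk n k has_real_derivative integral {0..2*pi} (f' r)) (at r)"
    unfolding Sk_def[abs_def] orbit_u_def cbox_interval by simp
  moreover have "integral {0..2*pi} (f' r)
      = real (k+1) * integral {0..2*pi} (\<lambda>\<theta>. orbit_u n r \<theta> ^ k * time_density n r \<theta> * (sin \<theta>)^2)"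
    unfolding f'_def[abs_def] orbit_u_def time_density_def by simp
  ultimately show ?thesis by simp
qed

lemma Ik_has_real_derivative:
  assumes r: "0 < r" "r < rmax n"
  shows "(Ik n k has_real_derivative r * Jk n k r) (at r)"
proof -
  let ?u = "orbit_u n r" and ?p = "time_density n r"
  define K where "K = integral {0..2*pi} (\<lambda>\<theta>. ?u \<theta> ^ k * ?p \<theta> * (sin \<theta>)^2)"
  have "((\<lambda>\<theta>. ?u \<theta> ^ k * ?p \<theta> * (sin \<theta>)^2) has_integral K) {0..2*pi}"
    unfolding K_def using n r
    by (intro integrable_integral integrable_continuous_interval continuous_intros) auto
  then have "((\<lambda>\<theta>. ?u \<theta> ^ k * (r * cos \<theta>)^2 * ?p \<theta> + r^2 * (?u \<theta> ^ k * ?p \<theta> * (sin \<theta>)^2))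
      has_integral Ik n k r + r^2 * K) {0..2*pi}"
    using n r by (intro has_integral_add has_integral_Ik has_integral_mult_right) auto
  moreover have "((\<lambda>\<theta>. ?u \<theta> ^ k * (r * cos \<theta>)^2 * ?p \<theta> + r^2 * (?u \<theta> ^ k * ?p \<theta> * (sin \<theta>)^2))
      has_integral r^2 * Jk n k r) {0..2*pi}"
    using has_integral_mult_right[OF has_integral_Jk[OF n less_imp_le[OF r(1)] r(2)], of "r^2"]
    by (rule has_integral_eq[rotated]) (simp add: power_mult_distrib cos_squared_eq algebra_simps)
  ultimately have JK: "r^2 * Jk n k r = Ik n k r + r^2 * K" by (rule has_integral_unique[symmetric])
  have "((\<lambda>x. x * Sk n k x / real (k+1)) has_real_derivative
      (Sk n k r + r * (real (k+1) * K)) / real (k+1)) (at r)"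
    using Sk_has_real_derivative[OF r, of k] unfolding K_def
    by (auto intro!: derivative_eq_intros)
  moreover have "(Sk n k r + r * (real (k+1) * K)) / real (k+1) = r * Jk n k r"
  proof -
    have "Sk n k r / real (k+1) = Ik n k r / r"
      using Ik_eq_Sk[OF n, of r k] r by (simp add: field_simps)
    moreover have "r * Jk n k r = Ik n k r / r + r * K"
      using JK r by (simp add: field_simps power2_eq_square)
    ultimately show ?thesis by (simp add: add_divide_distrib)
  qed
  ultimately have "((\<lambda>x. x * Sk n k x / real (k+1)) has_real_derivative r * Jk n k r) (at r)"
    by simp
  then show ?thesis
  proof (rule has_field_derivative_transform_within_open[where S="{0<..<rmax n}"])
    show "x * Sk n k x / real (k+1) = Ik n k x" if "x \<in> {0<..<rmax n}" for x
      using Ik_eq_Sk[OF n, of x k] that by (simp add: field_simps)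
  qed (use r in auto)
qed

lemma Ik_sqrt_has_real_derivative:
  assumes h: "0 < h" "h < d_n n"
  shows "((\<lambda>h. Ik n k (sqrt (2*h))) has_real_derivative Jk n k (sqrt (2*h))) (at h)"
proof -
  have r: "0 < sqrt (2*h)" "sqrt (2*h) < rmax n" using h by (simp_all add: rmax_def)
  have "((\<lambda>h. sqrt (2*h)) has_real_derivative 1 / sqrt (2*h)) (at h)"
    using h by (auto intro!: derivative_eq_intros simp: field_simps)
  from DERIV_chain2[OF Ik_has_real_derivative[OF r] this] show ?thesis
    using r by simp
qed

end

context
  fixes n :: nat and r :: real
  assumes n: "n \<ge> 1" and r: "0 < r" "r < rmax n"
begin

lemma orbit_u_0: "orbit_u n r 0 = 0"
  by (simp add: orbit_u_def psi_0[OF n])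

lemma Ik_0_pos: "0 < Ik n 0 r"
  unfolding Ik_def
proof (rule integral_pos_if_pos_point[where z=0])
  show "continuous_on {0..2*pi} (\<lambda>\<theta>. orbit_u n r \<theta> ^ 0 * (r * cos \<theta>)^2 * time_density n r \<theta>)"
    using n r by (intro continuous_intros) auto
  show "0 \<le> orbit_u n r \<theta> ^ 0 * (r * cos \<theta>)^2 * time_density n r \<theta>" for \<theta>
    using time_density_pos[OF n _ r(2), of \<theta>] r by (intro mult_nonneg_nonneg) auto
  show "0 < orbit_u n r 0 ^ 0 * (r * cos 0)^2 * time_density n r 0"
    using time_density_pos[OF n _ r(2), of 0] r by simp
qed auto

lemma Ik_n_less: "Ik n n r < (real n + 1) * Ik n 0 r"
proof -
  let ?w = "\<lambda>\<theta>. (r * cos \<theta>)^2 * time_density n r \<theta>"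
  have "((\<lambda>\<theta>. (real n + 1) * (orbit_u n r \<theta> ^ 0 * (r * cos \<theta>)^2 * time_density n r \<theta>)
      - orbit_u n r \<theta> ^ n * (r * cos \<theta>)^2 * time_density n r \<theta>)
      has_integral (real n + 1) * Ik n 0 r - Ik n n r) {0..2*pi}"
    using n r by (intro has_integral_diff has_integral_mult_right has_integral_Ik) auto
  then have "integral {0..2*pi} (\<lambda>\<theta>. (real n + 1 - orbit_u n r \<theta> ^ n) * ?w \<theta>)
      = (real n + 1) * Ik n 0 r - Ik n n r"
    by (intro integral_unique) (simp add: algebra_simps)
  moreover have "0 < integral {0..2*pi} (\<lambda>\<theta>. (real n + 1 - orbit_u n r \<theta> ^ n) * ?w \<theta>)"
  proof (rule integral_pos_if_pos_point[where z=0])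
    show "continuous_on {0..2*pi} (\<lambda>\<theta>. (real n + 1 - orbit_u n r \<theta> ^ n) * ?w \<theta>)"
      using n r by (intro continuous_intros) auto
    show "0 \<le> (real n + 1 - orbit_u n r \<theta> ^ n) * ?w \<theta>" for \<theta>
      using orbit_u_in_well[OF n _ r(2), of \<theta>] time_density_pos[OF n _ r(2), of \<theta>] r
      by (simp add: well_def less_imp_le)
    show "0 < (real n + 1 - orbit_u n r 0 ^ n) * ?w 0"
      using time_density_pos[OF n _ r(2), of 0] r n by (simp add: orbit_u_0 power_0_left)
  qed auto
  ultimately show ?thesis by simp
qed

lemma orbit_symmetric_sum_nonneg:
  assumes k: "even k \<longleftrightarrow> even n" and \<theta>: "\<theta> \<in> {0..pi}"
  shows "0 \<le> orbit_u n r \<theta> ^ k * time_density n r \<theta>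
      + orbit_u n r (\<theta> + pi) ^ k * time_density n r (\<theta> + pi)"
    and "0 < sin \<theta> \<Longrightarrow> 0 < orbit_u n r \<theta> ^ k * time_density n r \<theta>
      + orbit_u n r (\<theta> + pi) ^ k * time_density n r (\<theta> + pi)"
proof -
  have sum_eq: "orbit_u n r \<theta> ^ k * time_density n r \<theta>
      + orbit_u n r (\<theta> + pi) ^ k * time_density n r (\<theta> + pi)
      = psi n (r * sin \<theta>) ^ k * psi' n (r * sin \<theta>) + psi n (- (r * sin \<theta>)) ^ k * psi' n (- (r * sin \<theta>))"
    by (simp add: orbit_u_def time_density_def)
  have "r * sin \<theta> < rmax n" using r_sin_in_range[of r "rmax n" \<theta>] r by simp
  show pos: "0 < orbit_u n r \<theta> ^ k * time_density n r \<theta>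
      + orbit_u n r (\<theta> + pi) ^ k * time_density n r (\<theta> + pi)" if "0 < sin \<theta>"
    unfolding sum_eq using \<open>r * sin \<theta> < rmax n\<close> that r
    by (intro psi_power_psi'_symmetric_sum_pos[OF n k]) simp_all
  have "0 \<le> sin \<theta>" using \<theta> by (intro sin_ge_zero) auto
  then consider "sin \<theta> = 0" | "0 < sin \<theta>" by linarith
  then show "0 \<le> orbit_u n r \<theta> ^ k * time_density n r \<theta>
      + orbit_u n r (\<theta> + pi) ^ k * time_density n r (\<theta> + pi)"
  proof cases
    case 1
    then show ?thesis
      using psi'_pos[OF n, of 0] rmax_pos[OF n] by (simp add: sum_eq psi_0[OF n] power_0_left)
  qed (use pos in fastforce)
qed

lemma Ik_pos:
  assumes k: "even k \<longleftrightarrow> even n"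
  shows "0 < Ik n k r"
proof -
  let ?s = "\<lambda>\<theta>. orbit_u n r \<theta> ^ k * time_density n r \<theta> + orbit_u n r (\<theta> + pi) ^ k * time_density n r (\<theta> + pi)"
  have "Ik n k r = integral {0..pi} (\<lambda>\<theta>. orbit_u n r \<theta> ^ k * (r * cos \<theta>)^2 * time_density n r \<theta>
      + orbit_u n r (\<theta> + pi) ^ k * (r * cos (\<theta> + pi))^2 * time_density n r (\<theta> + pi))"
    unfolding Ik_def using n r by (intro integral_split_half_period continuous_intros) auto
  also have "\<dots> = integral {0..pi} (\<lambda>\<theta>. (r * cos \<theta>)^2 * ?s \<theta>)"
    by (simp add: algebra_simps)
  also have "0 < \<dots>"
  proof (rule integral_pos_if_pos_point[where z="pi/4"])
    show "continuous_on {0..pi} (\<lambda>\<theta>. (r * cos \<theta>)^2 * ?s \<theta>)"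
      using n r by (intro continuous_intros) auto
    show "0 \<le> (r * cos \<theta>)^2 * ?s \<theta>" if "\<theta> \<in> {0..pi}" for \<theta>
      using orbit_symmetric_sum_nonneg(1)[OF k that] by simp
    have "0 < sin (pi/4)" "0 < cos (pi/4)" by (simp_all add: sin_45 cos_45)
    then show "0 < (r * cos (pi/4))^2 * ?s (pi/4)"
      using orbit_symmetric_sum_nonneg(2)[OF k, of "pi/4"] r by simp
  qed auto
  finally show ?thesis .
qed

lemma Jk_nonneg:
  assumes k: "even k \<longleftrightarrow> even n"
  shows "0 \<le> Jk n k r"
proof -
  have "Jk n k r = integral {0..pi} (\<lambda>\<theta>. orbit_u n r \<theta> ^ k * time_density n r \<theta>
      + orbit_u n r (\<theta> + pi) ^ k * time_density n r (\<theta> + pi))"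
    unfolding Jk_def using n r by (intro integral_split_half_period continuous_intros) auto
  also have "0 \<le> \<dots>"
    using orbit_symmetric_sum_nonneg(1)[OF k] n r
    by (intro integral_nonneg integrable_continuous_interval continuous_intros) auto
  finally show ?thesis .
qed

lemma Jk_Ik_cross_pos: "0 < Jk n n r * Ik n 0 r - Ik n n r * Jk n 0 r"
proof -
  define I0 In J0 Jn P where "I0 = Ik n 0 r" and "In = Ik n n r" and "J0 = Jk n 0 r"
    and "Jn = Jk n n r" and "P = Jk n (n+2) r"
  define c where "c = real n / (2 * (real n + 2))"
  have nz: "real n + 1 \<noteq> 0" "real n + 2 \<noteq> 0" by simp_all
  have "r^2 / 2 * (Jn * I0 - In * J0) = (r^2 / 2 * Jn) * I0 - In * (r^2 / 2 * J0)"
    by (simp add: right_diff_distrib mult_ac)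
  also have "\<dots> = ((1 + c) * In + c * P) * I0 - In * (I0 + real n / (2 * (real n + 1) * (real n + 2)) * P)"
    using Jk_0_eq[OF n less_imp_le[OF r(1)] r(2)] Jk_n_eq[OF n less_imp_le[OF r(1)] r(2)]
    by (simp only: I0_def In_def J0_def Jn_def P_def c_def)
  also have "\<dots> = c * In * I0 + c * P * (I0 - In / (real n + 1))"
    using nz by (simp add: c_def divide_simps) (simp add: algebra_simps)
  finally have eq: "r^2 / 2 * (Jn * I0 - In * J0) = c * In * I0 + c * P * (I0 - In / (real n + 1))" .
  have "0 < c" using n by (simp add: c_def)
  have "0 < I0 - In / (real n + 1)" using Ik_n_less by (simp add: I0_def In_def field_simps)
  then have "0 \<le> c * P * (I0 - In / (real n + 1))"
    using Jk_nonneg[of "n+2"] \<open>0 < c\<close> by (simp add: P_def)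
  moreover have "0 < c * In * I0" using Ik_pos[of n] Ik_0_pos \<open>0 < c\<close> by (simp add: In_def I0_def)
  ultimately have "0 < r^2 / 2 * (Jn * I0 - In * J0)" unfolding eq by simp
  then show ?thesis using r by (simp add: zero_less_mult_iff I0_def In_def J0_def Jn_def)
qed

lemma abs_Ik_le:
  assumes M: "\<And>\<theta>. \<bar>orbit_u n r \<theta>\<bar> \<le> M"
  shows "\<bar>Ik n k r\<bar> \<le> M^k * Ik n 0 r"
proof -
  let ?w = "\<lambda>\<theta>. (r * cos \<theta>)^2 * time_density n r \<theta>"
  have w: "0 \<le> ?w \<theta>" for \<theta> using time_density_pos[OF n _ r(2), of \<theta>] r by simp
  have pow: "\<bar>orbit_u n r \<theta> ^ k\<bar> \<le> M^k" for \<theta>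
    using power_mono[OF M abs_ge_zero, of \<theta> k] by (simp add: power_abs)
  have I0: "((\<lambda>\<theta>. M^k * (orbit_u n r \<theta> ^ 0 * (r * cos \<theta>)^2 * time_density n r \<theta>))
      has_integral M^k * Ik n 0 r) {0..2*pi}"
    using n r by (intro has_integral_mult_right has_integral_Ik) auto
  have Ik: "((\<lambda>\<theta>. orbit_u n r \<theta> ^ k * (r * cos \<theta>)^2 * time_density n r \<theta>) has_integral Ik n k r) {0..2*pi}"
    using n r by (intro has_integral_Ik) auto
  have le: "\<bar>orbit_u n r \<theta> ^ k * ?w \<theta>\<bar> \<le> M^k * ?w \<theta>" for \<theta>
  proof -
    have "\<bar>orbit_u n r \<theta> ^ k\<bar> * ?w \<theta> \<le> M^k * ?w \<theta>" by (rule mult_right_mono[OF pow w])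
    then show ?thesis by (simp only: abs_mult[of "orbit_u n r \<theta> ^ k"] abs_of_nonneg[OF w])
  qed
  have "Ik n k r \<le> M^k * Ik n 0 r"
    using Ik I0 by (rule has_integral_le) (use le[unfolded abs_le_iff] in \<open>simp add: mult.assoc\<close>)
  moreover have "- Ik n k r \<le> M^k * Ik n 0 r"
    using has_integral_neg[OF Ik] I0 by (rule has_integral_le) (use le[unfolded abs_le_iff] in \<open>simp add: mult.assoc\<close>)
  ultimately show ?thesis by simp
qed

end

section \<open>The periodic orbits\<close>

lemma field_lipschitz_on_cball: "(2 + \<bar>M\<bar>^n)-lipschitz_on (cball 0 M) (field n)"
proof (rule lipschitz_onI)
  fix p q :: "real \<times> real" assume "p \<in> cball 0 M" "q \<in> cball 0 M"
  then have bounds: "\<bar>fst p\<bar> \<le> \<bar>M\<bar>" "\<bar>fst q\<bar> \<le> \<bar>M\<bar>"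
    using norm_fst_le[of "fst p" "snd p"] norm_fst_le[of "fst q" "snd q"] by auto
  define du dv where "du = fst p - fst q" and "dv = snd p - snd q"
  have d: "\<bar>du\<bar> \<le> dist p q" "\<bar>dv\<bar> \<le> dist p q"
    using dist_fst_le[of p q] dist_snd_le[of p q] by (simp_all add: du_def dv_def dist_real_def)
  define X where "X = (fst p ^ (n+1) - fst q ^ (n+1)) / (real n + 1)"
  have "\<bar>X\<bar> \<le> \<bar>M\<bar>^n * \<bar>du\<bar>"
    using abs_power_diff_le[OF bounds, of "n+1"] by (simp add: X_def du_def abs_divide field_simps)
  then have X: "\<bar>- du + X\<bar> \<le> (1 + \<bar>M\<bar>^n) * \<bar>du\<bar>"
    using abs_triangle_ineq[of "- du" X] by (simp add: algebra_simps)
  have "dist (field n p) (field n q) = norm (dv, - du + X)"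
    by (simp add: field_def dist_norm du_def dv_def X_def diff_divide_distrib algebra_simps)
  also have "\<dots> \<le> \<bar>dv\<bar> + \<bar>- du + X\<bar>"
    using norm_Pair_le[of dv "- du + X"] by simp
  also have "\<dots> \<le> dist p q + (1 + \<bar>M\<bar>^n) * dist p q"
    using d X mult_left_mono[OF d(1), of "1 + \<bar>M\<bar>^n"] by simp
  finally show "dist (field n p) (field n q) \<le> (2 + \<bar>M\<bar>^n) * dist p q"
    by (simp add: algebra_simps)
qed simp

text \<open>The signed time the flow needs from angle \<open>0\<close> to angle \<open>\<theta>\<close>; its inverse turns the angle
  parametrisation into a trajectory.\<close>

definition angle_time :: "nat \<Rightarrow> real \<Rightarrow> real \<Rightarrow> real" where
  "angle_time n r \<theta> = integral {0..\<theta>} (time_density n r) - integral {\<theta>..0} (time_density n r)"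

definition level_trajectory :: "nat \<Rightarrow> real \<Rightarrow> real \<Rightarrow> real \<times> real" where
  "level_trajectory n r t =
     (orbit_u n r (inv (angle_time n r) t), r * cos (inv (angle_time n r) t))"

context
  fixes n :: nat and r :: real
  assumes n: "n \<ge> 1" and r: "0 < r" "r < rmax n"
begin

lemma time_density_bounded_below:
  obtains m where "0 < m" "\<And>\<theta>. m \<le> time_density n r \<theta>"
proof -
  have sub: "{-r..r} \<subseteq> {- rmax n<..<rmax n}" using r by auto
  obtain w0 where w0: "w0 \<in> {-r..r}" "\<And>w. w \<in> {-r..r} \<Longrightarrow> psi' n w0 \<le> psi' n w"
    using continuous_attains_inf[OF compact_Icc _ continuous_on_subset[OF continuous_on_psi'[OF n] sub]] r
    by auto
  have "psi' n w0 \<le> time_density n r \<theta>" for \<theta>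
    using w0(2)[of "r * sin \<theta>"] abs_mult_sin_le[of r \<theta>] r by (simp add: time_density_def abs_le_iff)
  moreover have "0 < psi' n w0" using psi'_pos[OF n] w0(1) sub by auto
  ultimately show ?thesis using that by blast
qed

lemma angle_time_has_real_derivative:
  "(angle_time n r has_real_derivative time_density n r \<theta>) (at \<theta>)"
  unfolding angle_time_def[abs_def] using n r
  by (intro signed_integral_has_real_derivative continuous_intros) auto

lemma angle_time_0: "angle_time n r 0 = 0"
  by (simp add: angle_time_def)

lemma angle_time_bij: "bij (angle_time n r)"
  and angle_time_strict_mono: "strict_mono (angle_time n r)"
  and inv_angle_time_has_real_derivative:
    "(inv (angle_time n r) has_real_derivative inverse (time_density n r (inv (angle_time n r) t))) (at t)"
  using expanding_map_bij_and_inverse_derivative[OF angle_time_has_real_derivative]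
    time_density_bounded_below by metis+

lemma level_trajectory_has_vector_derivative:
  "(level_trajectory n r has_vector_derivative field n (level_trajectory n r t)) (at t)"
proof -
  define \<Theta> where "\<Theta> = inv (angle_time n r)"
  let ?u = "orbit_u n r" and ?p = "time_density n r"
  have p: "0 < ?p (\<Theta> t)" using time_density_pos[OF n _ r(2)] r by simp
  have d\<Theta>: "(\<Theta> has_real_derivative inverse (?p (\<Theta> t))) (at t)"
    unfolding \<Theta>_def by (rule inv_angle_time_has_real_derivative)
  have "((\<lambda>t. ?u (\<Theta> t)) has_real_derivative r * cos (\<Theta> t)) (at t)"
    using DERIV_chain2[OF orbit_u_has_real_derivative[OF n _ r(2)] d\<Theta>] r p
    by (simp add: field_simps)
  moreover have "((\<lambda>t. r * cos (\<Theta> t)) has_real_derivative - (r * sin (\<Theta> t)) * inverse (?p (\<Theta> t))) (at t)"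
    using d\<Theta> by (auto intro!: derivative_eq_intros)
  moreover have "- (r * sin (\<Theta> t)) * inverse (?p (\<Theta> t)) = - ?u (\<Theta> t) + ?u (\<Theta> t) ^ (n+1) / (real n + 1)"
    using orbit_r_sin[OF n _ r(2), of "\<Theta> t"] r p by (simp add: field_simps)
  ultimately have "((\<lambda>t. (?u (\<Theta> t), r * cos (\<Theta> t))) has_vector_derivative
      (r * cos (\<Theta> t), - ?u (\<Theta> t) + ?u (\<Theta> t) ^ (n+1) / (real n + 1))) (at t)"
    using p by (intro has_vector_derivative_Pair) (simp_all add: has_real_derivative_iff_has_vector_derivative)
  then show ?thesis by (simp add: level_trajectory_def[abs_def] field_def \<Theta>_def)
qed

lemma is_orbit_level_trajectory:
  "is_orbit n (r^2 / 2) (level_trajectory n r) (angle_time n r (2*pi))"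
  unfolding is_orbit_def
proof (intro conjI allI ballI level_trajectory_has_vector_derivative)
  let ?\<Theta> = "inv (angle_time n r)"
  have \<Theta>: "?\<Theta> (angle_time n r \<theta>) = \<theta>" for \<theta>
    using angle_time_bij by (simp add: bij_is_inj)
  show "level_trajectory n r 0 = (0, sqrt (2 * (r^2 / 2)))"
    using \<Theta>[of 0] r by (simp add: level_trajectory_def angle_time_0 orbit_u_def psi_0[OF n])
  show "level_trajectory n r (angle_time n r (2*pi)) = level_trajectory n r 0"
    using \<Theta>[of 0] \<Theta>[of "2*pi"] by (simp add: level_trajectory_def angle_time_0 orbit_u_def)
  show "0 < angle_time n r (2*pi)"
    using strict_monoD[OF angle_time_strict_mono, of 0 "2*pi"] by (simp add: angle_time_0)
  fix t assume t: "t \<in> {0<..<angle_time n r (2*pi)}"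
  have "angle_time n r 0 < angle_time n r (?\<Theta> t)" "angle_time n r (?\<Theta> t) < angle_time n r (2*pi)"
    using t surj_f_inv_f[OF bij_is_surj[OF angle_time_bij]] by (simp_all add: angle_time_0)
  then have \<Theta>_t: "0 < ?\<Theta> t" "?\<Theta> t < 2*pi"
    by (simp_all add: strict_mono_less[OF angle_time_strict_mono])
  have "cos (?\<Theta> t) \<noteq> 1"
  proof
    assume "cos (?\<Theta> t) = 1"
    then obtain k :: int where "?\<Theta> t = of_int k * 2 * pi" by (auto simp: cos_one_2pi_int)
    with \<Theta>_t have "0 < k" "k < 1" by (simp_all add: zero_less_mult_iff)
    then show False by linarith
  qed
  with r show "level_trajectory n r t \<noteq> level_trajectory n r 0"
    using \<Theta>[of 0] by (simp add: level_trajectory_def angle_time_0)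
qed

end

context
  fixes n :: nat and h :: real
  assumes n: "n \<ge> 1" and h: "0 < h" "h < d_n n"
begin

lemma level_radius: "0 < sqrt (2*h)" "sqrt (2*h) < rmax n" "sqrt (2*h)^2 / 2 = h"
  using h by (simp_all add: rmax_def)

lemma orbit_eq_level_trajectory:
  assumes "orbit n h = (x, T)"
  shows "T = angle_time n (sqrt (2*h)) (2*pi)"
    and "\<And>t. 0 \<le> t \<Longrightarrow> x t = level_trajectory n (sqrt (2*h)) t"
proof -
  define r where "r = sqrt (2*h)"
  define y where "y = level_trajectory n r"
  define T' where "T' = angle_time n r (2*pi)"
  have y: "is_orbit n h y T'"
    using is_orbit_level_trajectory[OF n level_radius(1,2)] level_radius(3)
    by (simp add: y_def T'_def r_def)
  then have x: "is_orbit n h x T"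
    using someI[of "\<lambda>(x, T). is_orbit n h x T" "(y, T')"] assms by (simp add: orbit_def)
  have eq: "x t = y t" if "0 \<le> t" for t
  proof (rule autonomous_ode_unique_forward[where F="field n"])
    show "\<exists>L. L-lipschitz_on (cball 0 M) (field n)" for M
      using field_lipschitz_on_cball by blast
  qed (use x y that in \<open>simp_all add: is_orbit_def\<close>)
  have per: "0 < T" "x T = x 0" "\<And>t. t \<in> {0<..<T} \<Longrightarrow> x t \<noteq> x 0"
    "0 < T'" "y T' = y 0" "\<And>t. t \<in> {0<..<T'} \<Longrightarrow> y t \<noteq> y 0"
    using x y by (auto simp: is_orbit_def)
  have "\<not> T < T'"
  proof
    assume "T < T'"
    then show False using per eq[of T] eq[of 0] by simp
  qed
  moreover have "\<not> T' < T"
  proof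
    assume "T' < T"
    then show False using per eq[of T'] eq[of 0] by simp
  qed
  ultimately show "T = angle_time n (sqrt (2*h)) (2*pi)" by (simp add: T'_def r_def)
  show "x t = level_trajectory n (sqrt (2*h)) t" if "0 \<le> t" for t
    using eq[OF that] by (simp add: y_def r_def)
qed

lemma oint_du_power_eq_Ik: "oint_du n h (\<lambda>u v. u^k * v) = Ik n k (sqrt (2*h))"
proof -
  define r where "r = sqrt (2*h)"
  have r: "0 < r" "r < rmax n" using level_radius by (simp_all add: r_def)
  obtain x T where xT: "orbit n h = (x, T)" by fastforce
  have T: "T = angle_time n r (2*pi)" and x: "\<And>t. 0 \<le> t \<Longrightarrow> x t = level_trajectory n r t"
    using orbit_eq_level_trajectory[OF xT] by (simp_all add: r_def)
  have x_orbit: "is_orbit n h x T"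
    using someI_ex[of "\<lambda>(x, T). is_orbit n h x T"] is_orbit_level_trajectory[OF n r] level_radius(3) xT
    by (force simp: orbit_def r_def)
  define G where "G t = fst (level_trajectory n r t) ^ k * (snd (level_trajectory n r t))^2" for t
  have "oint_du n h (\<lambda>u v. u^k * v) = integral {0..T} G"
  proof -
    have "deriv (\<lambda>s. fst (x s)) t = snd (x t)" for t
    proof (rule DERIV_imp_deriv)
      have "(x has_vector_derivative field n (x t)) (at t)" using x_orbit by (simp add: is_orbit_def)
      from has_vector_derivative_fst[OF this]
      show "((\<lambda>s. fst (x s)) has_real_derivative snd (x t)) (at t)"
        by (simp add: field_def has_real_derivative_iff_has_vector_derivative)
    qed
    then show ?thesis
      unfolding oint_du_def xT prod.case by (intro integral_cong) (auto simp: x G_def power2_eq_square)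
  qed
  also have "\<dots> = integral {angle_time n r 0..angle_time n r (2*pi)} G"
    by (simp add: T angle_time_0[OF n r])
  also have "\<dots> = integral {0..2*pi} (\<lambda>\<theta>. orbit_u n r \<theta> ^ k * (r * cos \<theta>)^2 * time_density n r \<theta>)"
  proof -
    have "continuous_on UNIV (level_trajectory n r)"
      using level_trajectory_has_vector_derivative[OF n r]
      by (intro continuous_at_imp_continuous_on ballI has_vector_derivative_continuous) auto
    then have "continuous_on UNIV G"
      unfolding G_def by (intro continuous_intros) auto
    have mono: "angle_time n r a \<le> angle_time n r b \<longleftrightarrow> a \<le> b" for a b
      by (rule strict_mono_less_eq[OF angle_time_strict_mono[OF n r]])
    have "((\<lambda>\<theta>. time_density n r \<theta> *\<^sub>R G (angle_time n r \<theta>))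
        has_integral integral {angle_time n r 0..angle_time n r (2*pi)} G) {0..2*pi}"
    proof (rule has_integral_substitution[where c="angle_time n r 0" and d="angle_time n r (2*pi)"])
      show "angle_time n r ` {0..2*pi} \<subseteq> {angle_time n r 0..angle_time n r (2*pi)}"
        using mono by auto
      show "continuous_on {angle_time n r 0..angle_time n r (2*pi)} G"
        using \<open>continuous_on UNIV G\<close> by (rule continuous_on_subset) simp
      show "(angle_time n r has_real_derivative time_density n r \<theta>) (at \<theta> within {0..2*pi})" for \<theta>
        by (rule has_field_derivative_at_within[OF angle_time_has_real_derivative[OF n r]])
    qed (simp_all add: mono)
    moreover have "inv (angle_time n r) (angle_time n r \<theta>) = \<theta>" for \<theta>
      using angle_time_bij[OF n r] by (simp add: bij_is_inj)
    ultimately show ?thesis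
      by (simp add: integral_unique G_def level_trajectory_def mult_ac)
  qed
  finally show ?thesis by (simp add: Ik_def r_def)
qed

end

section \<open>Monotonicity of the ratio\<close>

lemma Btilde_eq_Ik:
  assumes "n \<ge> 1" "0 < h" "h < d_n n"
  shows "Btilde n h = Ik n n (sqrt (2*h)) / Ik n 0 (sqrt (2*h))"
  using oint_du_power_eq_Ik[OF assms, of n] oint_du_power_eq_Ik[OF assms, of 0]
  by (simp add: Btilde_def B_def B0_def)

lemma Btilde_derivative_pos:
  assumes n: "n \<ge> 1" and h: "0 < h" "h < d_n n"
  shows "\<exists>D. (Btilde n has_real_derivative D) (at h) \<and> 0 < D"
proof -
  define r where "r = sqrt (2*h)"
  have r: "0 < r" "r < rmax n" using level_radius[OF n h] by (simp_all add: r_def)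
  define D where "D = (Jk n n r * Ik n 0 r - Ik n n r * Jk n 0 r) / (Ik n 0 r * Ik n 0 r)"
  have "((\<lambda>h. Ik n n (sqrt (2*h)) / Ik n 0 (sqrt (2*h))) has_real_derivative D) (at h)"
    using DERIV_divide[OF Ik_sqrt_has_real_derivative[OF n h, of n] Ik_sqrt_has_real_derivative[OF n h, of 0]]
      Ik_0_pos[OF n r] by (simp add: D_def r_def)
  then have "(Btilde n has_real_derivative D) (at h)"
    by (rule has_field_derivative_transform_within_open[where S="{0<..<d_n n}"])
      (use h Btilde_eq_Ik[OF n] in auto)
  moreover have "0 < D" using Jk_Ik_cross_pos[OF n r] Ik_0_pos[OF n r] by (simp add: D_def)
  ultimately show ?thesis by blast
qed

lemma abs_Btilde_le:
  assumes n: "n \<ge> 1" and h: "0 < h" "h < d_n n"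
    and M: "\<And>w. \<bar>w\<bar> \<le> sqrt (2*h) \<Longrightarrow> \<bar>psi n w\<bar> \<le> M"
  shows "\<bar>Btilde n h\<bar> \<le> M^n"
proof -
  define r where "r = sqrt (2*h)"
  have r: "0 < r" "r < rmax n" using level_radius[OF n h] by (simp_all add: r_def)
  have "\<bar>orbit_u n r \<theta>\<bar> \<le> M" for \<theta>
    using M[of "r * sin \<theta>"] abs_mult_sin_le[of r \<theta>] r by (simp add: orbit_u_def r_def)
  then have "\<bar>Ik n n r\<bar> \<le> M^n * Ik n 0 r" by (rule abs_Ik_le[OF n r])
  then show ?thesis
    using Ik_0_pos[OF n r] Btilde_eq_Ik[OF n h] by (simp add: r_def abs_divide divide_le_eq)
qed

lemma Btilde_tendsto_0:
  assumes n: "n \<ge> 1"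
  shows "(Btilde n \<longlongrightarrow> 0) (at_right 0)"
proof (rule tendstoI)
  fix e :: real assume "0 < e"
  define e' where "e' = min (e/2) 1"
  have e': "0 < e'" "e' \<le> 1" "e' < e" using \<open>0 < e\<close> by (auto simp: e'_def)
  have "isCont (psi n) 0" using isCont_psi[OF n] rmax_pos[OF n] by simp
  then obtain \<delta> where "0 < \<delta>" and \<delta>: "\<And>w. \<bar>w\<bar> < \<delta> \<Longrightarrow> \<bar>psi n w\<bar> < e'"
    using e'(1) psi_0[OF n] unfolding continuous_at_eps_delta by (auto simp: dist_real_def)
  have "\<bar>Btilde n h\<bar> < e" if h: "0 < h" "h < min (d_n n) (\<delta>^2 / 2)" for h
  proof -
    have "sqrt (2*h) < \<delta>"
      using h \<open>0 < \<delta>\<close> real_sqrt_less_iff[of "2*h" "\<delta>^2"] by simp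
    then have "\<bar>Btilde n h\<bar> \<le> e'^n"
      using \<delta> h by (intro abs_Btilde_le[OF n] less_imp_le) auto
    also have "\<dots> \<le> e'" using power_decreasing[of 1 n e'] n e' by simp
    finally show ?thesis using e' by simp
  qed
  moreover have "0 < min (d_n n) (\<delta>^2 / 2)" using n \<open>0 < \<delta>\<close> by (simp add: d_n_def)
  ultimately show "\<forall>\<^sub>F h in at_right 0. dist (Btilde n h) 0 < e"
    unfolding eventually_at_right_field by (intro exI[of _ "min (d_n n) (\<delta>^2 / 2)"]) auto
qed

theorem proposition1:
  fixes n :: nat
  assumes "n \<ge> 1"
  shows "strict_mono_on {0<..<d_n n} (Btilde n) \<and>
         (\<forall>h\<in>{0<..<d_n n}. \<exists>D. (Btilde n has_real_derivative D) (at h) \<and> D > 0) \<and>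
         (Btilde n \<longlongrightarrow> 0) (at_right 0)"
proof (intro conjI ballI)
  show deriv: "\<exists>D. (Btilde n has_real_derivative D) (at h) \<and> D > 0" if "h \<in> {0<..<d_n n}" for h
    using Btilde_derivative_pos[OF assms] that by simp
  show "strict_mono_on {0<..<d_n n} (Btilde n)"
  proof (rule strict_mono_onI)
    fix a b assume "a \<in> {0<..<d_n n}" "b \<in> {0<..<d_n n}" "a < b"
    then show "Btilde n a < Btilde n b"
    proof (rule_tac DERIV_pos_imp_increasing[OF \<open>a < b\<close>])
      fix x assume "a \<le> x" "x \<le> b"
      then have "x \<in> {0<..<d_n n}" using \<open>a \<in> _\<close> \<open>b \<in> _\<close> by simp
      then show "\<exists>y. (Btilde n has_real_derivative y) (at x) \<and> 0 < y" by (rule deriv)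
    qed
  qed
  show "(Btilde n \<longlongrightarrow> 0) (at_right 0)"
    by (rule Btilde_tendsto_0[OF assms])
qed

end
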